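(* Let $X=(x_{ij})_{2\le i,j\le n}$ be indeterminates and $I\subset\mathbb R[X]$ the ideal generated by all $x_{ij}-x_{ji}$ and all $x_{ij}x_{kl}+x_{ik}x_{jl}+x_{il}x_{jk}$ ($2\le i,j,k,l\le n$). Then modulo $I$: (i) $x_{aa}x_{ab}=0$ and $x_{ab_1}x_{ab_2}x_{ab_3}=0$ for all $a,b,b_1,b_2,b_3\in\{2,\dots,n\}$; (ii) $\det(x_{ij})_{2\le i,j\le n}=\frac{n!}{2^{n-1}}\,x_{22}x_{33}\cdots x_{nn}$; (iii) for all $i,j\ge0$, $E_i(x_{22},\dots,x_{nn})\,E_j(x_{22},\dots,x_{nn})=\binom{i+j}{i}E_{i+j}(x_{22},\dots,x_{nn})$, where $E_i$ denotes the $i$-th elementary symmetric polynomial. *)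

theory Defs
  imports Complex_Main "HOL-Library.Poly_Mapping" "HOL-Combinatorics.Permutations"
begin

text \<open>Real polynomials in the indeterminates x_(i,j), (i,j) :: nat \<times> nat,
  represented as finitely supported maps from monomials (finitely supported
  exponent vectors) to real coefficients.\<close>
type_synonym rpoly = "((nat \<times> nat) \<Rightarrow>\<^sub>0 nat) \<Rightarrow>\<^sub>0 real"

definition X :: "nat \<Rightarrow> nat \<Rightarrow> rpoly" where
  "X i j = Poly_Mapping.single (Poly_Mapping.single (i, j) 1) 1"

definition C :: "real \<Rightarrow> rpoly" where
  "C c = Poly_Mapping.single 0 c"

definition ideal_gen :: "rpoly set \<Rightarrow> rpoly set" where
  "ideal_gen S = {p. \<exists>F c. finite F \<and> F \<subseteq> S \<and> p = (\<Sum>g\<in>F. c g * g)}"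

definition gens :: "nat \<Rightarrow> rpoly set" where
  "gens n = {X i j - X j i | i j. i \<in> {2..n} \<and> j \<in> {2..n}}
          \<union> {X i j * X k l + X i k * X j l + X i l * X j k | i j k l.
               i \<in> {2..n} \<and> j \<in> {2..n} \<and> k \<in> {2..n} \<and> l \<in> {2..n}}"

definition I :: "nat \<Rightarrow> rpoly set" where
  "I n = ideal_gen (gens n)"

definition cong_mod :: "rpoly \<Rightarrow> rpoly \<Rightarrow> rpoly set \<Rightarrow> bool" where
  "cong_mod p q J \<longleftrightarrow> p - q \<in> J"

definition detX :: "nat \<Rightarrow> rpoly" where
  "detX n = (\<Sum>p | p permutes {2..n}. of_int (sign p) * (\<Prod>i\<in>{2..n}. X i (p i)))"

definition E :: "nat \<Rightarrow> nat \<Rightarrow> rpoly" where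
  "E n k = (\<Sum>S | S \<subseteq> {2..n} \<and> card S = k. \<Prod>s\<in>S. X s s)"

end

theory Submission
  imports Defs
begin

text \<open>Symmetrising the quadratic relation with repeated indices gives
  \<open>3 x\<^sub>a\<^sub>a x\<^sub>a\<^sub>b \<in> I\<close> and, together with it,
  \<open>2 x\<^sub>a\<^sub>b\<^sub>1 x\<^sub>a\<^sub>b\<^sub>2 x\<^sub>a\<^sub>b\<^sub>3 \<in> I\<close>.
  In particular every diagonal variable squares to zero, so a product of
  diagonal monomials vanishes unless they are disjoint; this yields (iii) by
  counting the ways to split an \<open>(i+j)\<close>-set.  For (ii), expand the
  determinant along a new index \<open>m\<close>: the term of a permutation sending
  \<open>m \<mapsto> b \<noteq> m\<close> contains \<open>x\<^sub>m\<^sub>b x\<^sub>a\<^sub>m\<close>, which modulo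
  \<open>I\<close> equals \<open>-x\<^sub>m\<^sub>m x\<^sub>a\<^sub>b / 2\<close>, turning it into \<open>1/2\<close> times the
  term of the permutation with \<open>m\<close> removed.  Hence adding an index to a
  \<open>k\<close>-set multiplies the determinant by \<open>(1 + k/2) x\<^sub>m\<^sub>m\<close>.\<close>

lemma ideal_gen_zero: "0 \<in> ideal_gen S"
  unfolding ideal_gen_def by (auto intro!: exI[of _ "{}"])

lemma ideal_gen_generator: "g \<in> S \<Longrightarrow> g \<in> ideal_gen S"
  unfolding ideal_gen_def by (intro CollectI exI[of _ "{g}"] exI[of _ "\<lambda>_. 1"]) auto

lemma ideal_gen_mult_left: "p \<in> ideal_gen S \<Longrightarrow> r * p \<in> ideal_gen S"
proof -
  assume "p \<in> ideal_gen S"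
  then obtain F c where "finite F" "F \<subseteq> S" "p = (\<Sum>g\<in>F. c g * g)"
    unfolding ideal_gen_def by auto
  then show ?thesis
    unfolding ideal_gen_def
    by (intro CollectI exI[of _ F] exI[of _ "\<lambda>g. r * c g"]) (auto simp: sum_distrib_left mult.assoc)
qed

lemma ideal_gen_add: "p \<in> ideal_gen S \<Longrightarrow> q \<in> ideal_gen S \<Longrightarrow> p + q \<in> ideal_gen S"
proof -
  assume "p \<in> ideal_gen S" "q \<in> ideal_gen S"
  then obtain F c G d where F: "finite F" "F \<subseteq> S" "p = (\<Sum>g\<in>F. c g * g)"
    and G: "finite G" "G \<subseteq> S" "q = (\<Sum>g\<in>G. d g * g)"
    unfolding ideal_gen_def by auto
  define e where "e g = (if g \<in> F then c g else 0) + (if g \<in> G then d g else 0)" for g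
  have "p = (\<Sum>g\<in>F \<union> G. (if g \<in> F then c g else 0) * g)"
    unfolding F(3) by (rule sym, rule sum.mono_neutral_cong_right) (use F G in auto)
  moreover have "q = (\<Sum>g\<in>F \<union> G. (if g \<in> G then d g else 0) * g)"
    unfolding G(3) by (rule sym, rule sum.mono_neutral_cong_right) (use F G in auto)
  ultimately have "p + q = (\<Sum>g\<in>F \<union> G. e g * g)"
    by (simp add: e_def distrib_right sum.distrib)
  then show ?thesis
    using F G unfolding ideal_gen_def by blast
qed

lemma ideal_gen_diff: "p \<in> ideal_gen S \<Longrightarrow> q \<in> ideal_gen S \<Longrightarrow> p - q \<in> ideal_gen S"
  using ideal_gen_add[of p S "(-1) * q"] ideal_gen_mult_left[of q S "-1"] by simp

lemma ideal_gen_sum: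
  "finite A \<Longrightarrow> (\<And>x. x \<in> A \<Longrightarrow> f x \<in> ideal_gen S) \<Longrightarrow> sum f A \<in> ideal_gen S"
  by (induction A rule: finite_induct) (auto intro: ideal_gen_zero ideal_gen_add)

lemma I_zero: "0 \<in> I n"
  unfolding I_def by (rule ideal_gen_zero)

lemma I_mult_left: "p \<in> I n \<Longrightarrow> r * p \<in> I n"
  unfolding I_def by (rule ideal_gen_mult_left)

lemma I_add: "p \<in> I n \<Longrightarrow> q \<in> I n \<Longrightarrow> p + q \<in> I n"
  unfolding I_def by (rule ideal_gen_add)

lemma I_diff: "p \<in> I n \<Longrightarrow> q \<in> I n \<Longrightarrow> p - q \<in> I n"
  unfolding I_def by (rule ideal_gen_diff)

lemma I_sum: "finite A \<Longrightarrow> (\<And>x. x \<in> A \<Longrightarrow> f x \<in> I n) \<Longrightarrow> sum f A \<in> I n"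
  unfolding I_def by (rule ideal_gen_sum)

lemma X_sym_in_I: "i \<in> {2..n} \<Longrightarrow> j \<in> {2..n} \<Longrightarrow> X i j - X j i \<in> I n"
  unfolding I_def by (rule ideal_gen_generator) (auto simp: gens_def)

lemma X_quadratic_in_I:
  "i \<in> {2..n} \<Longrightarrow> j \<in> {2..n} \<Longrightarrow> k \<in> {2..n} \<Longrightarrow> l \<in> {2..n} \<Longrightarrow>
   X i j * X k l + X i k * X j l + X i l * X j k \<in> I n"
  unfolding I_def gens_def
  by (rule ideal_gen_generator, rule UnI2, rule CollectI, intro exI conjI) (rule refl | assumption)+

lemma C_add: "C (a + b) = C a + C b"
  by (simp add: C_def single_add)

lemma C_mult: "C (a * b) = C a * C b"
  by (simp add: C_def mult_single)

lemma C_one: "C 1 = 1"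
  by (simp add: C_def)

lemma C_of_nat: "C (real k) = of_nat k"
  by (simp add: C_def)

lemma C_inverse_of_nat_cancel: "k \<noteq> 0 \<Longrightarrow> C (1 / real k) * (of_nat k * y) = y"
  by (simp add: C_of_nat[symmetric] mult.assoc[symmetric] C_mult[symmetric] C_one)

lemma diag_mult_in_I:
  assumes a: "a \<in> {2..n}" and b: "b \<in> {2..n}"
  shows "X a a * X a b \<in> I n"
proof -
  have "of_nat 3 * (X a a * X a b) = X a a * X a b + X a a * X a b + X a b * X a a"
    by (simp add: algebra_simps)
  then have "X a a * X a b = C (1 / real 3) * (X a a * X a b + X a a * X a b + X a b * X a a)"
    using C_inverse_of_nat_cancel[of 3 "X a a * X a b"] by simp
  then show ?thesis
    using I_mult_left[OF X_quadratic_in_I[OF a a a b]] by metis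
qed

lemma row_cube_in_I:
  assumes a: "a \<in> {2..n}" and b: "b1 \<in> {2..n}" "b2 \<in> {2..n}" "b3 \<in> {2..n}"
  shows "X a b1 * X a b2 * X a b3 \<in> I n"
proof -
  let ?r = "X a a * X b1 b2 + X a b1 * X a b2 + X a b2 * X a b1"
  have "of_nat 2 * (X a b1 * X a b2 * X a b3) = X a b3 * ?r - X b1 b2 * (X a a * X a b3)"
    by (simp add: algebra_simps)
  then have "X a b1 * X a b2 * X a b3 = C (1 / real 2) * (X a b3 * ?r - X b1 b2 * (X a a * X a b3))"
    using C_inverse_of_nat_cancel[of 2 "X a b1 * X a b2 * X a b3"] by simp
  also have "\<dots> \<in> I n"
    by (intro I_mult_left I_diff X_quadratic_in_I diag_mult_in_I a b)
  finally show ?thesis .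
qed

lemma transposition_relation_in_I:
  assumes a: "a \<in> {2..n}" and b: "b \<in> {2..n}" and m: "m \<in> {2..n}"
  shows "X m b * X a m + C (1/2) * X m m * X a b \<in> I n"
proof -
  have "C (1/2) * (X m m * X a b + X m a * X m b + X m b * X m a)
      = C (1/2) * (X m m * X a b) + C (1 / real 2) * (of_nat 2 * (X m a * X m b))"
    by (simp add: algebra_simps)
  also have "\<dots> = C (1/2) * (X m m * X a b) + X m a * X m b"
    by (simp only: C_inverse_of_nat_cancel)
  finally have "X m b * X a m + C (1/2) * X m m * X a b =
     C (1/2) * (X m m * X a b + X m a * X m b + X m b * X m a) + X m b * (X a m - X m a)"
    by (simp add: algebra_simps)
  also have "\<dots> \<in> I n"
    by (intro I_add I_mult_left X_quadratic_in_I X_sym_in_I a b m)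
  finally show ?thesis .
qed

definition leibniz_term :: "nat set \<Rightarrow> (nat \<Rightarrow> nat) \<Rightarrow> rpoly" where
  "leibniz_term S p = of_int (sign p) * (\<Prod>i\<in>S. X i (p i))"

definition detX_on :: "nat set \<Rightarrow> rpoly" where
  "detX_on S = (\<Sum>p\<in>{p. p permutes S}. leibniz_term S p)"

lemma leibniz_term_insert_fixed:
  assumes "finite S" "m \<notin> S" "q permutes S"
  shows "leibniz_term (insert m S) (transpose m m \<circ> q) = X m m * leibniz_term S q"
  using assms permutes_not_in[OF assms(3,2)] by (simp add: leibniz_term_def algebra_simps)

lemma prod_transpose_comp:
  assumes fin: "finite S" and m: "m \<notin> S" and q: "q permutes S" and a: "a \<in> S"
  shows "(\<Prod>i\<in>insert m S. X i ((transpose m (q a) \<circ> q) i))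
       = X m (q a) * X a m * (\<Prod>i\<in>S - {a}. X i (q i))"
proof -
  have "(transpose m (q a) \<circ> q) i = q i" if "i \<in> S - {a}" for i
  proof -
    have "q i \<noteq> q a" using that a permutes_inj[OF q] by (auto dest: injD)
    moreover have "q i \<noteq> m" using that m permutes_in_image[OF q] by auto
    ultimately show ?thesis by (simp add: transpose_def)
  qed
  then have "(\<Prod>i\<in>S - {a}. X i ((transpose m (q a) \<circ> q) i)) = (\<Prod>i\<in>S - {a}. X i (q i))"
    by (intro prod.cong) auto
  then show ?thesis
    using fin m a permutes_not_in[OF q m]
    by (simp add: prod.remove[OF fin a] mult.assoc)
qed

lemma leibniz_term_insert_transpose:
  assumes fin: "finite S" and m: "m \<notin> S" and sub: "insert m S \<subseteq> {2..N}"
    and q: "q permutes S" and b: "b \<in> S"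
  shows "leibniz_term (insert m S) (transpose m b \<circ> q) - C (1/2) * X m m * leibniz_term S q \<in> I N"
proof -
  obtain a where a: "a \<in> S" "q a = b"
    using b permutes_image[OF q] by (metis imageE)
  define R where "R = (\<Prod>i\<in>S - {a}. X i (q i))"
  have "permutation q"
    using fin q permutation_permutes by blast
  then have "sign (transpose m b \<circ> q) = - sign q"
    using sign_compose[OF permutation_swap_id, of q m b] b m by (auto simp: sign_swap_id)
  then have "leibniz_term (insert m S) (transpose m b \<circ> q) = - of_int (sign q) * (X m b * X a m * R)"
    unfolding leibniz_term_def R_def using prod_transpose_comp[OF fin m q a(1)] a(2) by simp
  moreover have "leibniz_term S q = of_int (sign q) * (X a b * R)"
    unfolding leibniz_term_def R_def prod.remove[OF fin a(1)] a(2) ..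
  ultimately have "leibniz_term (insert m S) (transpose m b \<circ> q) - C (1/2) * X m m * leibniz_term S q
       = (- of_int (sign q) * R) * (X m b * X a m + C (1/2) * X m m * X a b)"
    by (simp add: algebra_simps)
  also have "\<dots> \<in> I N"
    using sub a b by (intro I_mult_left transposition_relation_in_I) auto
  finally show ?thesis .
qed

lemma detX_on_insert:
  assumes fin: "finite S" and m: "m \<notin> S" and sub: "insert m S \<subseteq> {2..N}"
  shows "detX_on (insert m S) - C (1 + real (card S) / 2) * X m m * detX_on S \<in> I N"
proof -
  let ?P = "{q. q permutes S}"
  let ?t = "\<lambda>b q. leibniz_term (insert m S) (transpose m b \<circ> q)"
  let ?r = "\<lambda>b q. ?t b q - C (1/2) * X m m * leibniz_term S q"
  have "detX_on (insert m S) = (\<Sum>b\<in>insert m S. \<Sum>q\<in>?P. ?t b q)"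
    unfolding detX_on_def by (rule sum_over_permutations_insert[OF fin m])
  also have "\<dots> = (\<Sum>q\<in>?P. X m m * leibniz_term S q) + (\<Sum>b\<in>S. \<Sum>q\<in>?P. ?t b q)"
    using fin m leibniz_term_insert_fixed[OF fin m] by (simp add: sum.insert)
  finally have split: "detX_on (insert m S) = X m m * detX_on S + (\<Sum>b\<in>S. \<Sum>q\<in>?P. ?t b q)"
    by (simp add: detX_on_def sum_distrib_left)
  have "(\<Sum>b\<in>S. \<Sum>q\<in>?P. ?r b q)
      = (\<Sum>b\<in>S. \<Sum>q\<in>?P. ?t b q) - of_nat (card S) * (C (1/2) * X m m * detX_on S)"
    by (simp add: sum_subtractf sum_distrib_left detX_on_def)
  moreover have "C (1 + real (card S) / 2) = 1 + of_nat (card S) * C (1/2)"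
    by (simp add: C_add C_one C_mult[symmetric] C_of_nat[symmetric])
  ultimately have "detX_on (insert m S) - C (1 + real (card S) / 2) * X m m * detX_on S
      = (\<Sum>b\<in>S. \<Sum>q\<in>?P. ?r b q)"
    unfolding split by (simp add: algebra_simps)
  also have "\<dots> \<in> I N"
    using finite_permutations[OF fin]
    by (intro I_sum fin leibniz_term_insert_transpose[OF fin m sub]) auto
  finally show ?thesis .
qed

lemma detX_on_cong_diagonal:
  "finite S \<Longrightarrow> S \<subseteq> {2..N} \<Longrightarrow>
   detX_on S - C (fact (card S + 1) / 2 ^ card S) * (\<Prod>i\<in>S. X i i) \<in> I N"
proof (induction S rule: finite_induct)
  case empty
  show ?case by (simp add: detX_on_def leibniz_term_def C_one I_zero)
next
  case (insert m S)
  let ?k = "card S"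
  have "fact (card (insert m S) + 1) / 2 ^ card (insert m S)
      = (1 + real ?k / 2) * (fact (?k + 1) / 2 ^ ?k :: real)"
    using insert.hyps by (simp add: field_simps)
  then have coeff: "C (fact (card (insert m S) + 1) / 2 ^ card (insert m S))
      = C (1 + real ?k / 2) * C (fact (?k + 1) / 2 ^ ?k)"
    by (simp only: C_mult)
  have "detX_on (insert m S) - C (fact (card (insert m S) + 1) / 2 ^ card (insert m S)) * (\<Prod>i\<in>insert m S. X i i)
      = (detX_on (insert m S) - C (1 + real ?k / 2) * X m m * detX_on S)
        + (C (1 + real ?k / 2) * X m m) * (detX_on S - C (fact (?k + 1) / 2 ^ ?k) * (\<Prod>i\<in>S. X i i))"
    using insert.hyps unfolding coeff by (simp add: algebra_simps)
  also have "\<dots> \<in> I N"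
    using insert by (intro I_add I_mult_left detX_on_insert) auto
  finally show ?case .
qed

definition diag_monomial :: "nat set \<Rightarrow> rpoly" where
  "diag_monomial S = (\<Prod>s\<in>S. X s s)"

lemma diag_monomial_overlap_in_I:
  assumes "finite S" "finite T" "S \<subseteq> {2..n}" "T \<subseteq> {2..n}" "S \<inter> T \<noteq> {}"
  shows "diag_monomial S * diag_monomial T \<in> I n"
proof -
  obtain a where a: "a \<in> S" "a \<in> T" using assms(5) by blast
  have "diag_monomial S * diag_monomial T
      = (diag_monomial (S - {a}) * diag_monomial (T - {a})) * (X a a * X a a)"
    unfolding diag_monomial_def prod.remove[OF assms(1) a(1)] prod.remove[OF assms(2) a(2)]
    by (simp add: algebra_simps)
  also have "\<dots> \<in> I n"
    using a assms(3) by (intro I_mult_left diag_mult_in_I) auto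
  finally show ?thesis .
qed

lemma sum_disjoint_pairs_of_subsets:
  fixes f :: "'a set \<Rightarrow> 'b :: comm_semiring_1"
  assumes finA: "finite A"
  defines "K \<equiv> \<lambda>k. {S. S \<subseteq> A \<and> card S = k}"
  shows "(\<Sum>S\<in>K i. \<Sum>T\<in>K j. if S \<inter> T = {} then f (S \<union> T) else 0)
       = of_nat ((i + j) choose i) * (\<Sum>U\<in>K (i + j). f U)"
proof -
  have finK: "finite (K k)" for k
    unfolding K_def using finA by (auto intro: finite_subset[of _ "Pow A"])
  have fin_sub: "finite S" if "S \<subseteq> A" for S
    using finA that by (rule finite_subset[rotated])
  define P where "P = {p \<in> K i \<times> K j. fst p \<inter> snd p = {}}"
  define Sg where "Sg = Sigma (K (i + j)) (\<lambda>U. {S. S \<subseteq> U \<and> card S = i})"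
  have "(\<Sum>S\<in>K i. \<Sum>T\<in>K j. if S \<inter> T = {} then f (S \<union> T) else 0)
      = (\<Sum>p\<in>P. f (fst p \<union> snd p))"
    unfolding P_def sum.cartesian_product
    by (subst sum.inter_filter) (auto simp: finK split_beta)
  also have "\<dots> = (\<Sum>p\<in>Sg. f (fst p))"
  proof (rule sum.reindex_bij_witness[where j = "\<lambda>(S, T). (S \<union> T, S)"
        and i = "\<lambda>(U, S). (S, U - S)"])
    fix p assume "p \<in> P"
    then show "(\<lambda>(U, S). (S, U - S)) ((\<lambda>(S, T). (S \<union> T, S)) p) = p"
      and "(\<lambda>(S, T). (S \<union> T, S)) p \<in> Sg"
      and "f (fst ((\<lambda>(S, T). (S \<union> T, S)) p)) = f (fst p \<union> snd p)"
      unfolding P_def Sg_def K_def by (auto simp: card_Un_disjoint fin_sub)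
  next
    fix p assume "p \<in> Sg"
    then show "(\<lambda>(S, T). (S \<union> T, S)) ((\<lambda>(U, S). (S, U - S)) p) = p"
      and "(\<lambda>(U, S). (S, U - S)) p \<in> P"
      unfolding P_def Sg_def K_def
      by (auto simp: card_Diff_subset fin_sub intro: finite_subset)
  qed
  also have "\<dots> = (\<Sum>U\<in>K (i + j). \<Sum>S\<in>{S. S \<subseteq> U \<and> card S = i}. f U)"
    unfolding Sg_def using finK
    by (subst sum.Sigma) (auto simp: K_def fin_sub split_beta intro: finite_subset[of _ "Pow _"])
  also have "\<dots> = (\<Sum>U\<in>K (i + j). of_nat ((i + j) choose i) * f U)"
    by (intro sum.cong refl) (auto simp: K_def n_subsets fin_sub)
  finally show ?thesis
    by (simp add: sum_distrib_left)
qed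

lemma E_mult_cong: "E n i * E n j - of_nat ((i + j) choose i) * E n (i + j) \<in> I n"
proof -
  define K where "K k = {S. S \<subseteq> {2..n} \<and> card S = k}" for k
  have E_eq: "E n k = (\<Sum>S\<in>K k. diag_monomial S)" for k
    unfolding E_def K_def diag_monomial_def ..
  have finK: "finite (K k)" for k
    unfolding K_def by (auto intro: finite_subset[of _ "Pow {2..n}"])
  have "E n i * E n j - of_nat ((i + j) choose i) * E n (i + j)
      = (\<Sum>S\<in>K i. \<Sum>T\<in>K j. diag_monomial S * diag_monomial T
          - (if S \<inter> T = {} then diag_monomial (S \<union> T) else 0))"
    using sum_disjoint_pairs_of_subsets[where A = "{2..n}" and f = diag_monomial and i = i and j = j]
    by (simp add: E_eq K_def sum_product sum_subtractf)
  also have "\<dots> \<in> I n"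
  proof (intro I_sum finK)
    fix S T assume "S \<in> K i" "T \<in> K j"
    then have f: "finite S" "finite T" "S \<subseteq> {2..n}" "T \<subseteq> {2..n}"
      unfolding K_def by (auto intro: finite_subset)
    show "diag_monomial S * diag_monomial T
        - (if S \<inter> T = {} then diag_monomial (S \<union> T) else 0) \<in> I n"
      using diag_monomial_overlap_in_I[OF f]
      by (cases "S \<inter> T = {}") (simp_all add: diag_monomial_def prod.union_disjoint f I_zero)
  qed
  finally show ?thesis .
qed

theorem mainTheorem14:
  fixes n :: nat
  shows "(\<forall>a\<in>{2..n}. \<forall>b\<in>{2..n}. cong_mod (X a a * X a b) 0 (I n))
       \<and> (\<forall>a\<in>{2..n}. \<forall>b1\<in>{2..n}. \<forall>b2\<in>{2..n}. \<forall>b3\<in>{2..n}.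
            cong_mod (X a b1 * X a b2 * X a b3) 0 (I n))
       \<and> cong_mod (detX n) (C (fact n / 2 ^ (n - 1)) * (\<Prod>i\<in>{2..n}. X i i)) (I n)
       \<and> (\<forall>i j. cong_mod (E n i * E n j) (of_nat ((i + j) choose i) * E n (i + j)) (I n))"
proof -
  have "fact (card {2..n} + 1) / 2 ^ card {2..n} = (fact n / 2 ^ (n - 1) :: real)"
    by (cases n) auto
  then have "cong_mod (detX n) (C (fact n / 2 ^ (n - 1)) * (\<Prod>i\<in>{2..n}. X i i)) (I n)"
    using detX_on_cong_diagonal[of "{2..n}" n]
    unfolding cong_mod_def detX_def detX_on_def leibniz_term_def by simp
  then show ?thesis
    unfolding cong_mod_def
    by (simp add: diag_mult_in_I row_cube_in_I E_mult_cong)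
qed

end
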